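(* Let $G$ be a set, $\kappa$ a regular cardinal, $L$ a normal modal logic with the finite model property and $T\subseteq\mathrm{Fm}_\kappa(G)$. Then the Lindenbaum–Tarski algebra $\mathrm{LT}_L(G,\kappa,T)$ is a $\kappa$-complete $L$-algebra (every subset of cardinality $<\kappa$ has a meet and a join), with $\bigwedge\{[\psi]:\psi\in S\}=[\bigwedge S]$ and $\bigvee\{[\psi]:\psi\in S\}=[\bigvee S]$ for $|S|<\kappa$.
   Context: $\mathrm{Fm}_\kappa(G)$ is the least set containing $G$ closed under $\neg$, $\Box$, and $\bigwedge S,\bigvee S$ for sets $S$ of size $<\kappa$; $\varphi\leftrightarrow\psi$ abbreviates $(\neg\varphi\vee\psi)\wedge(\neg\psi\vee\varphi)$ with binary $\wedge,\vee$ meaning $\bigwedge,\bigvee$ of two-element sets. The calculus $(G,\kappa,L,T)$ has rules: (Ax) $\varphi\Rightarrow\varphi$; (W) from $\Gamma\Rightarrow\Delta$ infer $\Gamma,\Gamma'\Rightarrow\Delta,\Delta'$; (Cut) from $\Gamma\Rightarrow\Delta,\varphi$ for every $\varphi\in S$ and $S,\Gamma'\Rightarrow\Delta'$ infer $\Gamma,\Gamma'\Rightarrow\Delta,\Delta'$; (L$\neg$) from $\Gamma\Rightarrow\Delta,S$ infer $\neg S,\Gamma\Rightarrow\Delta$; (R$\neg$) from $S,\Gamma\Rightarrow\Delta$ infer $\Gamma\Rightarrow\Delta,\neg S$; for a family $\mathscr S$ of sets each of size $<\kappa$: (L$\bigwedge$) from $\bigcup\mathscr S,\Gamma\Rightarrow\Delta$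 infer $\{\bigwedge S\},\Gamma\Rightarrow\Delta$; (R$\bigwedge$) from $\Gamma\Rightarrow\Delta,\{c(S):S\in\mathscr S\}$ for every choice function $c$ infer $\Gamma\Rightarrow\Delta,\{\bigwedge S:S\in\mathscr S\}$; (L$\bigvee$) from $\{c(S)\},\Gamma\Rightarrow\Delta$ for every choice function $c$ infer $\{\bigvee S:S\in\mathscr S\},\Gamma\Rightarrow\Delta$; (R$\bigvee$) from $\Gamma\Rightarrow\Delta,\bigcup\mathscr S$ infer $\Gamma\Rightarrow\Delta,\{\bigvee S\}$; (Nec) from $S\Rightarrow\varphi$ infer $\Box S\Rightarrow\Box\varphi$; (lf) for sets $S_n$ of size $<\kappa$: from $\{\Box^n\bigvee(I\cap S_n):n\in\omega\},\Gamma\Rightarrow\Delta$ for every finite $I\subseteq\bigcup_nS_n$ infer $\{\Box^n\bigvee S_n:n\in\omega\},\Gamma\Rightarrow\Delta$; (T,L) from $S,\Gamma\Rightarrow\Delta$ infer $\Gamma\Rightarrow\Delta$ for $S\subseteq T\cup L_{(G,\kappa)}$ ($L_{(G,\kappa)}$ = substitution instances in $\mathrm{Fm}_\kappa(G)$ of theorems of $L$). Proofs are well-founded trees. $\mathrm{LT}_L(G,\kappa,T)$ is the quotient of $\mathrm{Fm}_\kappa(G)$ by $\varphi\sim\psi\iff(G,\kappa,L,T)\vdash\ \Rightarrow\varphi\leftrightarrow\psi$, with operations defined on representatives; $[\varphi]\le[\psi]$ iff $\varphi\Rightarrow\psi$ is provable. An $L$-algebra is a modal algebra in the variety corresponding to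 $L$. *)

theory Defs
  imports Main
begin

unbundle cardinal_syntax

text \<open>Big conjunctions/disjunctions of a set S of formulas are represented by an
 index set I (a subset of the index type carrying the cardinal k) together with a
 function f; the formula BigAnd I f stands for the conjunction of the set f ` I.\<close>

datatype ('g,'i) fm =
    Var 'g
  | Neg "('g,'i) fm"
  | Box "('g,'i) fm"
  | BigAnd "'i set" "'i \<Rightarrow> ('g,'i) fm"
  | BigOr "'i set" "'i \<Rightarrow> ('g,'i) fm"

inductive_set Fm :: "'i rel \<Rightarrow> 'g set \<Rightarrow> ('g,'i) fm set" for k G where
  FVar: "g \<in> G \<Longrightarrow> Var g \<in> Fm k G"
| FNeg: "\<phi> \<in> Fm k G \<Longrightarrow> Neg \<phi> \<in> Fm k G"
| FBox: "\<phi> \<in> Fm k G \<Longrightarrow> Box \<phi> \<in> Fm k G"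
| FAnd: "|I| <o k \<Longrightarrow> (\<And>i. i \<in> I \<Longrightarrow> f i \<in> Fm k G) \<Longrightarrow> BigAnd I f \<in> Fm k G"
| FOr: "|I| <o k \<Longrightarrow> (\<And>i. i \<in> I \<Longrightarrow> f i \<in> Fm k G) \<Longrightarrow> BigOr I f \<in> Fm k G"

definition two_idx :: "'i \<times> 'i" where
  "two_idx = (SOME p. fst p \<noteq> snd p)"

definition and2 :: "('g,'i) fm \<Rightarrow> ('g,'i) fm \<Rightarrow> ('g,'i) fm" where
  "and2 \<phi> \<psi> = BigAnd {fst two_idx, snd two_idx} (\<lambda>i. if i = fst two_idx then \<phi> else \<psi>)"

definition or2 :: "('g,'i) fm \<Rightarrow> ('g,'i) fm \<Rightarrow> ('g,'i) fm" where
  "or2 \<phi> \<psi> = BigOr {fst two_idx, snd two_idx} (\<lambda>i. if i = fst two_idx then \<phi> else \<psi>)"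

definition fiff :: "('g,'i) fm \<Rightarrow> ('g,'i) fm \<Rightarrow> ('g,'i) fm" where
  "fiff \<phi> \<psi> = and2 (or2 (Neg \<phi>) \<psi>) (or2 (Neg \<psi>) \<phi>)"

definition ftop :: "('g,'i) fm" where
  "ftop = BigAnd {} (\<lambda>_. undefined)"

definition fbot :: "('g,'i) fm" where
  "fbot = BigOr {} (\<lambda>_. undefined)"

datatype mfm = MVar nat | MNeg mfm | MAnd mfm mfm | MOr mfm mfm | MBox mfm

definition mimp :: "mfm \<Rightarrow> mfm \<Rightarrow> mfm" where
  "mimp a b = MOr (MNeg a) b"

fun msubst :: "(nat \<Rightarrow> mfm) \<Rightarrow> mfm \<Rightarrow> mfm" where
  "msubst s (MVar n) = s n"
| "msubst s (MNeg a) = MNeg (msubst s a)"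
| "msubst s (MAnd a b) = MAnd (msubst s a) (msubst s b)"
| "msubst s (MOr a b) = MOr (msubst s a) (msubst s b)"
| "msubst s (MBox a) = MBox (msubst s a)"

text \<open>Classical evaluation, treating variables and boxed formulas as atoms.\<close>
fun teval :: "(mfm \<Rightarrow> bool) \<Rightarrow> mfm \<Rightarrow> bool" where
  "teval v (MVar n) = v (MVar n)"
| "teval v (MNeg a) = (\<not> teval v a)"
| "teval v (MAnd a b) = (teval v a \<and> teval v b)"
| "teval v (MOr a b) = (teval v a \<or> teval v b)"
| "teval v (MBox a) = v (MBox a)"

definition tautology :: "mfm \<Rightarrow> bool" where
  "tautology \<phi> \<longleftrightarrow> (\<forall>v. teval v \<phi>)"

definition normal_logic :: "mfm set \<Rightarrow> bool" where
  "normal_logic L \<longleftrightarrow>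
     (\<forall>\<phi>. tautology \<phi> \<longrightarrow> \<phi> \<in> L)
   \<and> mimp (MBox (mimp (MVar 0) (MVar 1))) (mimp (MBox (MVar 0)) (MBox (MVar 1))) \<in> L
   \<and> (\<forall>\<phi> \<psi>. \<phi> \<in> L \<longrightarrow> mimp \<phi> \<psi> \<in> L \<longrightarrow> \<psi> \<in> L)
   \<and> (\<forall>\<phi>. \<phi> \<in> L \<longrightarrow> MBox \<phi> \<in> L)
   \<and> (\<forall>\<phi> s. \<phi> \<in> L \<longrightarrow> msubst s \<phi> \<in> L)"

fun ksat :: "'w rel \<Rightarrow> (nat \<Rightarrow> 'w set) \<Rightarrow> 'w \<Rightarrow> mfm \<Rightarrow> bool" where
  "ksat R V w (MVar n) = (w \<in> V n)"
| "ksat R V w (MNeg a) = (\<not> ksat R V w a)"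
| "ksat R V w (MAnd a b) = (ksat R V w a \<and> ksat R V w b)"
| "ksat R V w (MOr a b) = (ksat R V w a \<or> ksat R V w b)"
| "ksat R V w (MBox a) = (\<forall>u. (w, u) \<in> R \<longrightarrow> ksat R V u a)"

definition frame_valid :: "'w set \<Rightarrow> 'w rel \<Rightarrow> mfm \<Rightarrow> bool" where
  "frame_valid W R \<phi> \<longleftrightarrow> (\<forall>V w. w \<in> W \<longrightarrow> ksat R V w \<phi>)"

text \<open>Finite model property: every non-theorem is refuted on a finite frame validating L
 (finite frames coded with worlds in nat).\<close>
definition has_fmp :: "mfm set \<Rightarrow> bool" where
  "has_fmp L \<longleftrightarrow> (\<forall>\<phi>. \<phi> \<notin> L \<longrightarrow>
     (\<exists>(W::nat set) R. finite W \<and> W \<noteq> {} \<and> R \<subseteq> W \<times> W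
        \<and> (\<forall>\<psi>\<in>L. frame_valid W R \<psi>) \<and> \<not> frame_valid W R \<phi>))"

fun inst :: "(nat \<Rightarrow> ('g,'i) fm) \<Rightarrow> mfm \<Rightarrow> ('g,'i) fm" where
  "inst s (MVar n) = s n"
| "inst s (MNeg a) = Neg (inst s a)"
| "inst s (MAnd a b) = and2 (inst s a) (inst s b)"
| "inst s (MOr a b) = or2 (inst s a) (inst s b)"
| "inst s (MBox a) = Box (inst s a)"

definition Linst :: "'i rel \<Rightarrow> 'g set \<Rightarrow> mfm set \<Rightarrow> ('g,'i) fm set" where
  "Linst k G L = {inst s \<phi> | s \<phi>. \<phi> \<in> L \<and> (\<forall>n. s n \<in> Fm k G)}"

definition good_family :: "'i rel \<Rightarrow> 'g set \<Rightarrow> ('i set \<times> ('i \<Rightarrow> ('g,'i) fm)) set \<Rightarrow> bool" where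
  "good_family k G F \<longleftrightarrow> (\<forall>(I,f)\<in>F. |I| <o k \<and> f ` I \<subseteq> Fm k G)"

inductive prov :: "'i rel \<Rightarrow> 'g set \<Rightarrow> mfm set \<Rightarrow> ('g,'i) fm set
    \<Rightarrow> ('g,'i) fm set \<Rightarrow> ('g,'i) fm set \<Rightarrow> bool"
  for k G L T where
  Ax: "\<phi> \<in> Fm k G \<Longrightarrow> prov k G L T {\<phi>} {\<phi>}"
| W: "prov k G L T \<Gamma> \<Delta> \<Longrightarrow> \<Gamma>' \<subseteq> Fm k G \<Longrightarrow> \<Delta>' \<subseteq> Fm k G
      \<Longrightarrow> prov k G L T (\<Gamma> \<union> \<Gamma>') (\<Delta> \<union> \<Delta>')"
| Cut: "\<Gamma> \<subseteq> Fm k G \<Longrightarrow> \<Delta> \<subseteq> Fm k G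
      \<Longrightarrow> (\<And>\<phi>. \<phi> \<in> S \<Longrightarrow> prov k G L T \<Gamma> (\<Delta> \<union> {\<phi>}))
      \<Longrightarrow> prov k G L T (S \<union> \<Gamma>') \<Delta>'
      \<Longrightarrow> prov k G L T (\<Gamma> \<union> \<Gamma>') (\<Delta> \<union> \<Delta>')"
| LNeg: "prov k G L T \<Gamma> (\<Delta> \<union> S) \<Longrightarrow> prov k G L T (Neg ` S \<union> \<Gamma>) \<Delta>"
| RNeg: "prov k G L T (S \<union> \<Gamma>) \<Delta> \<Longrightarrow> prov k G L T \<Gamma> (\<Delta> \<union> Neg ` S)"
| LAnd: "good_family k G F
      \<Longrightarrow> prov k G L T ((\<Union>(I,f)\<in>F. f ` I) \<union> \<Gamma>) \<Delta>
      \<Longrightarrow> prov k G L T ((\<lambda>(I,f). BigAnd I f) ` F \<union> \<Gamma>) \<Delta>"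
| RAnd: "good_family k G F \<Longrightarrow> \<Gamma> \<subseteq> Fm k G \<Longrightarrow> \<Delta> \<subseteq> Fm k G
      \<Longrightarrow> (\<And>c. (\<forall>(I,f)\<in>F. c (f ` I) \<in> f ` I)
             \<Longrightarrow> prov k G L T \<Gamma> (\<Delta> \<union> (\<lambda>(I,f). c (f ` I)) ` F))
      \<Longrightarrow> prov k G L T \<Gamma> (\<Delta> \<union> (\<lambda>(I,f). BigAnd I f) ` F)"
| LOr: "good_family k G F \<Longrightarrow> \<Gamma> \<subseteq> Fm k G \<Longrightarrow> \<Delta> \<subseteq> Fm k G
      \<Longrightarrow> (\<And>c. (\<forall>(I,f)\<in>F. c (f ` I) \<in> f ` I)
             \<Longrightarrow> prov k G L T ((\<lambda>(I,f). c (f ` I)) ` F \<union> \<Gamma>) \<Delta>)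
      \<Longrightarrow> prov k G L T ((\<lambda>(I,f). BigOr I f) ` F \<union> \<Gamma>) \<Delta>"
| ROr: "good_family k G F
      \<Longrightarrow> prov k G L T \<Gamma> (\<Delta> \<union> (\<Union>(I,f)\<in>F. f ` I))
      \<Longrightarrow> prov k G L T \<Gamma> (\<Delta> \<union> (\<lambda>(I,f). BigOr I f) ` F)"
| Nec: "prov k G L T S {\<phi>} \<Longrightarrow> prov k G L T (Box ` S) {Box \<phi>}"
| lf: "(\<And>n. |J n| <o k \<and> h n ` J n \<subseteq> Fm k G) \<Longrightarrow> \<Gamma> \<subseteq> Fm k G \<Longrightarrow> \<Delta> \<subseteq> Fm k G
      \<Longrightarrow> (\<And>I. finite I \<Longrightarrow> I \<subseteq> (\<Union>n. h n ` J n)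
             \<Longrightarrow> prov k G L T ((\<lambda>n. (Box ^^ n) (BigOr (J n \<inter> h n -` I) (h n))) ` UNIV \<union> \<Gamma>) \<Delta>)
      \<Longrightarrow> prov k G L T ((\<lambda>n. (Box ^^ n) (BigOr (J n) (h n))) ` UNIV \<union> \<Gamma>) \<Delta>"
| TL: "S \<subseteq> T \<union> Linst k G L \<Longrightarrow> prov k G L T (S \<union> \<Gamma>) \<Delta> \<Longrightarrow> prov k G L T \<Gamma> \<Delta>"

record 'a malg =
  mcar :: "'a set"
  mmeet :: "'a \<Rightarrow> 'a \<Rightarrow> 'a"
  mjoin :: "'a \<Rightarrow> 'a \<Rightarrow> 'a"
  mneg :: "'a \<Rightarrow> 'a"
  mtop :: 'a
  mbot :: 'a
  mbox :: "'a \<Rightarrow> 'a"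

text \<open>Boolean algebra (Huntington's postulates) with a normal operator box.\<close>
definition modal_algebra :: "'a malg \<Rightarrow> bool" where
  "modal_algebra A \<longleftrightarrow>
     mtop A \<in> mcar A \<and> mbot A \<in> mcar A
   \<and> (\<forall>a\<in>mcar A. mneg A a \<in> mcar A \<and> mbox A a \<in> mcar A)
   \<and> (\<forall>a\<in>mcar A. \<forall>b\<in>mcar A. mmeet A a b \<in> mcar A \<and> mjoin A a b \<in> mcar A)
   \<and> (\<forall>a\<in>mcar A. \<forall>b\<in>mcar A. mmeet A a b = mmeet A b a \<and> mjoin A a b = mjoin A b a)
   \<and> (\<forall>a\<in>mcar A. \<forall>b\<in>mcar A. \<forall>c\<in>mcar A.
        mmeet A a (mjoin A b c) = mjoin A (mmeet A a b) (mmeet A a c)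
      \<and> mjoin A a (mmeet A b c) = mmeet A (mjoin A a b) (mjoin A a c))
   \<and> (\<forall>a\<in>mcar A. mjoin A a (mbot A) = a \<and> mmeet A a (mtop A) = a)
   \<and> (\<forall>a\<in>mcar A. mjoin A a (mneg A a) = mtop A \<and> mmeet A a (mneg A a) = mbot A)
   \<and> mbox A (mtop A) = mtop A
   \<and> (\<forall>a\<in>mcar A. \<forall>b\<in>mcar A. mbox A (mmeet A a b) = mmeet A (mbox A a) (mbox A b))"

fun meval :: "'a malg \<Rightarrow> (nat \<Rightarrow> 'a) \<Rightarrow> mfm \<Rightarrow> 'a" where
  "meval A v (MVar n) = v n"
| "meval A v (MNeg a) = mneg A (meval A v a)"
| "meval A v (MAnd a b) = mmeet A (meval A v a) (meval A v b)"
| "meval A v (MOr a b) = mjoin A (meval A v a) (meval A v b)"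
| "meval A v (MBox a) = mbox A (meval A v a)"

definition L_algebra :: "mfm set \<Rightarrow> 'a malg \<Rightarrow> bool" where
  "L_algebra L A \<longleftrightarrow> modal_algebra A \<and>
     (\<forall>\<phi>\<in>L. \<forall>v. (\<forall>n. v n \<in> mcar A) \<longrightarrow> meval A v \<phi> = mtop A)"

definition mle :: "'a malg \<Rightarrow> 'a \<Rightarrow> 'a \<Rightarrow> bool" where
  "mle A a b \<longleftrightarrow> mmeet A a b = a"

definition is_glb :: "'a malg \<Rightarrow> 'a set \<Rightarrow> 'a \<Rightarrow> bool" where
  "is_glb A X m \<longleftrightarrow> m \<in> mcar A \<and> (\<forall>x\<in>X. mle A m x)
     \<and> (\<forall>y\<in>mcar A. (\<forall>x\<in>X. mle A y x) \<longrightarrow> mle A y m)"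

definition is_lub :: "'a malg \<Rightarrow> 'a set \<Rightarrow> 'a \<Rightarrow> bool" where
  "is_lub A X m \<longleftrightarrow> m \<in> mcar A \<and> (\<forall>x\<in>X. mle A x m)
     \<and> (\<forall>y\<in>mcar A. (\<forall>x\<in>X. mle A x y) \<longrightarrow> mle A m y)"

definition kappa_complete :: "'k rel \<Rightarrow> 'a malg \<Rightarrow> bool" where
  "kappa_complete k A \<longleftrightarrow> (\<forall>X. X \<subseteq> mcar A \<and> |X| <o k \<longrightarrow>
     (\<exists>m. is_glb A X m) \<and> (\<exists>j. is_lub A X j))"

definition lt_rel :: "'i rel \<Rightarrow> 'g set \<Rightarrow> mfm set \<Rightarrow> ('g,'i) fm set \<Rightarrow> ('g,'i) fm rel" where
  "lt_rel k G L T = {(\<phi>,\<psi>). \<phi> \<in> Fm k G \<and> \<psi> \<in> Fm k G \<and> prov k G L T {} {fiff \<phi> \<psi>}}"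

definition lt_cls :: "'i rel \<Rightarrow> 'g set \<Rightarrow> mfm set \<Rightarrow> ('g,'i) fm set \<Rightarrow> ('g,'i) fm \<Rightarrow> ('g,'i) fm set" where
  "lt_cls k G L T \<phi> = lt_rel k G L T `` {\<phi>}"

definition rep :: "'a set \<Rightarrow> 'a" where
  "rep X = (SOME \<phi>. \<phi> \<in> X)"

definition LT :: "'i rel \<Rightarrow> 'g set \<Rightarrow> mfm set \<Rightarrow> ('g,'i) fm set \<Rightarrow> ('g,'i) fm set malg" where
  "LT k G L T =
    \<lparr> mcar = Fm k G // lt_rel k G L T,
      mmeet = (\<lambda>X Y. lt_cls k G L T (and2 (rep X) (rep Y))),
      mjoin = (\<lambda>X Y. lt_cls k G L T (or2 (rep X) (rep Y))),
      mneg = (\<lambda>X. lt_cls k G L T (Neg (rep X))),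
      mtop = lt_cls k G L T ftop,
      mbot = lt_cls k G L T fbot,
      mbox = (\<lambda>X. lt_cls k G L T (Box (rep X))) \<rparr>"

definition LT_well_defined :: "'i rel \<Rightarrow> 'g set \<Rightarrow> mfm set \<Rightarrow> ('g,'i) fm set \<Rightarrow> bool" where
  "LT_well_defined k G L T \<longleftrightarrow> equiv (Fm k G) (lt_rel k G L T)
   \<and> (\<forall>\<phi> \<phi>' \<psi> \<psi>'. (\<phi>,\<phi>') \<in> lt_rel k G L T \<longrightarrow> (\<psi>,\<psi>') \<in> lt_rel k G L T \<longrightarrow>
        (Neg \<phi>, Neg \<phi>') \<in> lt_rel k G L T \<and> (Box \<phi>, Box \<phi>') \<in> lt_rel k G L T
      \<and> (and2 \<phi> \<psi>, and2 \<phi>' \<psi>') \<in> lt_rel k G L T \<and> (or2 \<phi> \<psi>, or2 \<phi>' \<psi>') \<in> lt_rel k G L T)"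

end

theory Submission
  imports Defs
begin

(*
  Derivability of the sequent \<phi> \<Rightarrow> \<psi> is a preorder \<preceq> on Fm_kappa(G) whose kernel is
  provable equivalence, so LT_L(G,kappa,T) is its poset reflection: [\<phi>] \<le> [\<psi>] iff \<phi> \<preceq> \<psi>.
  With a single principal formula, the rules for big conjunctions and disjunctions say
  precisely that BigAnd S is a greatest and BigOr S a least upper bound of S for \<preceq>.
  Binary connectives are the two-element case (kappa is infinite), and the distributive,
  complement and box laws are short derivations in the calculus. A substitution instance of
  a theorem of L is an axiom by rule (T,L), hence provably equivalent to the top formula.
  Finally, fewer than kappa classes are the image of a family of representatives indexed by
  fewer than kappa indices, which gives kappa-completeness.
*)

lemma finite_ordLess_cinfinite:
  assumes "Card_order k" "cinfinite k" "finite A"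
  shows "|A| <o k"
proof (rule Cfinite_ordLess_Cinfinite)
  show "Cfinite |A|" using assms(3) by (simp add: cfinite_def card_of_card_order_on Field_card_of)
  show "Cinfinite k" using assms(1,2) by simp
qed

lemma two_idx_distinct:
  assumes "a \<noteq> (b :: 'i)"
  shows "fst (two_idx :: 'i \<times> 'i) \<noteq> snd two_idx"
proof -
  have "\<exists>p :: 'i \<times> 'i. fst p \<noteq> snd p" using assms by auto
  then show ?thesis unfolding two_idx_def by (rule someI_ex)
qed

inductive_cases Fm_NegE: "Neg \<phi> \<in> Fm k G"
inductive_cases Fm_BoxE: "Box \<phi> \<in> Fm k G"
inductive_cases Fm_BigAndE: "BigAnd I f \<in> Fm k G"
inductive_cases Fm_BigOrE: "BigOr I f \<in> Fm k G"

lemma Fm_Neg_iff [simp]: "Neg \<phi> \<in> Fm k G \<longleftrightarrow> \<phi> \<in> Fm k G"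
  by (auto intro: Fm.FNeg elim: Fm_NegE)

lemma Fm_Box_iff [simp]: "Box \<phi> \<in> Fm k G \<longleftrightarrow> \<phi> \<in> Fm k G"
  by (auto intro: Fm.FBox elim: Fm_BoxE)

lemma Fm_funpow_Box_iff [simp]: "(Box ^^ n) \<phi> \<in> Fm k G \<longleftrightarrow> \<phi> \<in> Fm k G"
  by (induction n) auto

lemma Fm_BigAnd_iff: "BigAnd I f \<in> Fm k G \<longleftrightarrow> |I| <o k \<and> f ` I \<subseteq> Fm k G"
  by (auto intro: Fm.FAnd elim: Fm_BigAndE)

lemma Fm_BigOr_iff: "BigOr I f \<in> Fm k G \<longleftrightarrow> |I| <o k \<and> f ` I \<subseteq> Fm k G"
  by (auto intro: Fm.FOr elim: Fm_BigOrE)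

lemma prov_subset_Fm:
  assumes "prov k G L T \<Gamma> \<Delta>"
  shows "\<Gamma> \<subseteq> Fm k G \<and> \<Delta> \<subseteq> Fm k G"
  using assms
proof (induction rule: prov.induct)
  case (lf J h \<Gamma> \<Delta>)
  (* \<Gamma> \<subseteq> Fm k G comes from the premise for the empty finite set I *)
  then show ?case by (fastforce simp: Fm_BigOr_iff)
qed (auto simp: good_family_def Fm_BigAnd_iff Fm_BigOr_iff)

section \<open>Derived rules of the calculus\<close>

locale sequent_calculus =
  fixes k :: "'i rel" and G :: "'g set" and L :: "mfm set" and T :: "('g,'i) fm set"
begin

abbreviation derives :: "('g,'i) fm set \<Rightarrow> ('g,'i) fm set \<Rightarrow> bool" (infix "\<turnstile>" 50) where
  "\<Gamma> \<turnstile> \<Delta> \<equiv> prov k G L T \<Gamma> \<Delta>"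

abbreviation entails :: "('g,'i) fm \<Rightarrow> ('g,'i) fm \<Rightarrow> bool" (infix "\<preceq>" 50) where
  "\<phi> \<preceq> \<psi> \<equiv> {\<phi>} \<turnstile> {\<psi>}"

lemma derives_Fm:
  assumes "\<Gamma> \<turnstile> \<Delta>"
  shows "\<Gamma> \<subseteq> Fm k G" "\<Delta> \<subseteq> Fm k G"
  using prov_subset_Fm[OF assms] by simp_all

lemma entails_Fm: "\<phi> \<preceq> \<psi> \<Longrightarrow> \<phi> \<in> Fm k G \<and> \<psi> \<in> Fm k G"
  using derives_Fm by blast

lemma derives_mono:
  assumes "\<Gamma> \<turnstile> \<Delta>" "\<Gamma> \<subseteq> \<Gamma>'" "\<Delta> \<subseteq> \<Delta>'" "\<Gamma>' \<subseteq> Fm k G" "\<Delta>' \<subseteq> Fm k G"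
  shows "\<Gamma>' \<turnstile> \<Delta>'"
  using W[OF assms(1,4,5)] assms(2,3) by (simp add: sup_absorb2)

lemma derives_axiom:
  assumes "\<phi> \<in> \<Gamma>" "\<phi> \<in> \<Delta>" "\<Gamma> \<subseteq> Fm k G" "\<Delta> \<subseteq> Fm k G"
  shows "\<Gamma> \<turnstile> \<Delta>"
  using assms by (intro derives_mono[OF Ax[where \<phi> = \<phi>]]) auto

lemma entails_derivesI:
  assumes "\<phi> \<preceq> \<psi>" "\<phi> \<in> \<Gamma>" "\<psi> \<in> \<Delta>" "\<Gamma> \<subseteq> Fm k G" "\<Delta> \<subseteq> Fm k G"
  shows "\<Gamma> \<turnstile> \<Delta>"
  using assms by (intro derives_mono[OF assms(1)]) auto

lemma derives_cut:
  assumes "\<Gamma> \<turnstile> insert \<phi> \<Delta>" "insert \<phi> \<Gamma> \<turnstile> \<Delta>"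
  shows "\<Gamma> \<turnstile> \<Delta>"
  using Cut[where \<Gamma> = \<Gamma> and \<Delta> = \<Delta> and S = "{\<phi>}" and \<Gamma>' = \<Gamma> and \<Delta>' = \<Delta>]
    assms derives_Fm[OF assms(1)] derives_Fm[OF assms(2)] by simp

lemma derives_NegL: "Neg \<phi> \<in> \<Gamma> \<Longrightarrow> \<Gamma> \<turnstile> insert \<phi> \<Delta> \<Longrightarrow> \<Gamma> \<turnstile> \<Delta>"
  using LNeg[where \<Gamma> = \<Gamma> and \<Delta> = \<Delta> and S = "{\<phi>}"] by (simp add: insert_absorb)

lemma derives_NegR: "Neg \<phi> \<in> \<Delta> \<Longrightarrow> insert \<phi> \<Gamma> \<turnstile> \<Delta> \<Longrightarrow> \<Gamma> \<turnstile> \<Delta>"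
  using RNeg[where \<Gamma> = \<Gamma> and \<Delta> = \<Delta> and S = "{\<phi>}"] by (simp add: insert_absorb)

lemma good_family_singleton: "good_family k G {(I, f)} \<longleftrightarrow> |I| <o k \<and> f ` I \<subseteq> Fm k G"
  unfolding good_family_def by simp

lemma derives_BigAndL:
  assumes "BigAnd I f \<in> \<Gamma>" "f ` I \<union> \<Gamma> \<turnstile> \<Delta>"
  shows "\<Gamma> \<turnstile> \<Delta>"
  using LAnd[where F = "{(I, f)}" and \<Gamma> = \<Gamma> and \<Delta> = \<Delta>] assms derives_Fm(1)[OF assms(2)]
  by (auto simp: good_family_singleton Fm_BigAnd_iff insert_absorb)

lemma derives_BigOrR:
  assumes "BigOr I f \<in> \<Delta>" "\<Gamma> \<turnstile> \<Delta> \<union> f ` I"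
  shows "\<Gamma> \<turnstile> \<Delta>"
  using ROr[where F = "{(I, f)}" and \<Gamma> = \<Gamma> and \<Delta> = \<Delta>] assms derives_Fm(2)[OF assms(2)]
  by (auto simp: good_family_singleton Fm_BigOr_iff insert_absorb)

lemma derives_BigAndR:
  assumes "BigAnd I f \<in> \<Delta>" "\<Gamma> \<subseteq> Fm k G" "\<Delta> \<subseteq> Fm k G"
    and branches: "\<And>i. i \<in> I \<Longrightarrow> \<Gamma> \<turnstile> insert (f i) \<Delta>"
  shows "\<Gamma> \<turnstile> \<Delta>"
proof -
  have "\<Gamma> \<turnstile> \<Delta> \<union> (\<lambda>(I, f). BigAnd I f) ` {(I, f)}"
  proof (rule RAnd)
    show "good_family k G {(I, f)}"
      using subsetD[OF assms(3,1)] by (simp add: good_family_singleton Fm_BigAnd_iff)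
    fix c assume "\<forall>(I', f') \<in> {(I, f)}. c (f' ` I') \<in> f' ` I'"
    then obtain i where "i \<in> I" "c (f ` I) = f i" by auto
    then show "\<Gamma> \<turnstile> \<Delta> \<union> (\<lambda>(I, f). c (f ` I)) ` {(I, f)}" using branches by simp
  qed (fact assms)+
  then show ?thesis using assms(1) by (simp add: insert_absorb)
qed

lemma derives_BigOrL:
  assumes "BigOr I f \<in> \<Gamma>" "\<Gamma> \<subseteq> Fm k G" "\<Delta> \<subseteq> Fm k G"
    and branches: "\<And>i. i \<in> I \<Longrightarrow> insert (f i) \<Gamma> \<turnstile> \<Delta>"
  shows "\<Gamma> \<turnstile> \<Delta>"
proof -
  have "(\<lambda>(I, f). BigOr I f) ` {(I, f)} \<union> \<Gamma> \<turnstile> \<Delta>"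
  proof (rule LOr)
    show "good_family k G {(I, f)}"
      using subsetD[OF assms(2,1)] by (simp add: good_family_singleton Fm_BigOr_iff)
    fix c assume "\<forall>(I', f') \<in> {(I, f)}. c (f' ` I') \<in> f' ` I'"
    then obtain i where "i \<in> I" "c (f ` I) = f i" by auto
    then show "(\<lambda>(I, f). c (f ` I)) ` {(I, f)} \<union> \<Gamma> \<turnstile> \<Delta>" using branches by simp
  qed (fact assms)+
  then show ?thesis using assms(1) by (simp add: insert_absorb)
qed

lemma derives_Linst:
  assumes "\<phi> \<in> Linst k G L" "\<phi> \<in> \<Delta>" "\<Gamma> \<subseteq> Fm k G" "\<Delta> \<subseteq> Fm k G"
  shows "\<Gamma> \<turnstile> \<Delta>"
proof (rule TL[where S = "{\<phi>}"])
  show "{\<phi>} \<union> \<Gamma> \<turnstile> \<Delta>"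
    using assms(2-4) by (intro derives_axiom[where \<phi> = \<phi>]) auto
qed (use assms(1) in blast)

lemma entails_refl: "\<phi> \<in> Fm k G \<Longrightarrow> \<phi> \<preceq> \<phi>"
  by (rule derives_axiom) auto

lemma entails_trans: "\<phi> \<preceq> \<psi> \<Longrightarrow> \<psi> \<preceq> \<chi> \<Longrightarrow> \<phi> \<preceq> \<chi>"
  by (rule derives_cut[where \<phi> = \<psi>]) (auto intro: derives_mono dest: entails_Fm)

lemma Neg_entails_Neg:
  assumes "\<phi> \<preceq> \<psi>" shows "Neg \<psi> \<preceq> Neg \<phi>"
  apply (rule derives_NegR[of \<phi>], simp)
  apply (rule derives_NegL[of \<psi>], simp)
  apply (rule derives_mono[OF assms]; use entails_Fm[OF assms] in simp)
  done

lemma Box_entails_Box: "\<phi> \<preceq> \<psi> \<Longrightarrow> Box \<phi> \<preceq> Box \<psi>"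
  using Nec[where S = "{\<phi>}" and \<phi> = \<psi>] by simp

lemma BigAnd_entails:
  assumes "BigAnd I f \<in> Fm k G" "i \<in> I" shows "BigAnd I f \<preceq> f i"
proof (rule derives_BigAndL[of I f])
  show "f ` I \<union> {BigAnd I f} \<turnstile> {f i}"
    using assms by (intro derives_axiom[of "f i"]) (auto simp: Fm_BigAnd_iff)
qed simp

lemma entails_BigAndI:
  assumes "\<chi> \<in> Fm k G" "BigAnd I f \<in> Fm k G" "\<And>i. i \<in> I \<Longrightarrow> \<chi> \<preceq> f i"
  shows "\<chi> \<preceq> BigAnd I f"
proof (rule derives_BigAndR[of I f])
  fix i assume "i \<in> I"
  with assms show "{\<chi>} \<turnstile> insert (f i) {BigAnd I f}"
    by (intro entails_derivesI[OF assms(3)]) (auto simp: Fm_BigAnd_iff)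
qed (use assms in simp_all)

lemma entails_BigOr:
  assumes "BigOr I f \<in> Fm k G" "i \<in> I" shows "f i \<preceq> BigOr I f"
proof (rule derives_BigOrR[of I f])
  show "{f i} \<turnstile> {BigOr I f} \<union> f ` I"
    using assms by (intro derives_axiom[of "f i"]) (auto simp: Fm_BigOr_iff)
qed simp

lemma BigOr_entailsI:
  assumes "\<chi> \<in> Fm k G" "BigOr I f \<in> Fm k G" "\<And>i. i \<in> I \<Longrightarrow> f i \<preceq> \<chi>"
  shows "BigOr I f \<preceq> \<chi>"
proof (rule derives_BigOrL[of I f])
  fix i assume "i \<in> I"
  with assms show "insert (f i) {BigOr I f} \<turnstile> {\<chi>}"
    by (intro entails_derivesI[OF assms(3)]) (auto simp: Fm_BigOr_iff)
qed (use assms in simp_all)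

lemma derives_ftop: "ftop \<in> \<Delta> \<Longrightarrow> \<Gamma> \<subseteq> Fm k G \<Longrightarrow> \<Delta> \<subseteq> Fm k G \<Longrightarrow> \<Gamma> \<turnstile> \<Delta>"
  unfolding ftop_def by (rule derives_BigAndR) auto

lemma derives_fbot: "fbot \<in> \<Gamma> \<Longrightarrow> \<Gamma> \<subseteq> Fm k G \<Longrightarrow> \<Delta> \<subseteq> Fm k G \<Longrightarrow> \<Gamma> \<turnstile> \<Delta>"
  unfolding fbot_def by (rule derives_BigOrL) auto

end

section \<open>Binary connectives and the Boolean laws\<close>

locale lindenbaum_tarski = sequent_calculus k G L T
  for k :: "'i rel" and G :: "'g set" and L :: "mfm set" and T :: "('g,'i) fm set" +
  assumes card_order_k: "card_order k" and cinfinite_k: "cinfinite k"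
begin

lemma finite_ordLess_k: "finite A \<Longrightarrow> |A| <o k"
  using finite_ordLess_cinfinite card_order_on_Card_order[OF card_order_k] cinfinite_k by blast

lemma two_idx_distinct_k: "fst (two_idx :: 'i \<times> 'i) \<noteq> snd two_idx"
proof -
  have "infinite (UNIV :: 'i set)"
    by (rule infinite_super[OF subset_UNIV cinfinite_k[unfolded cinfinite_def]])
  then obtain b :: 'i where "b \<noteq> undefined"
    using ex_new_if_finite[of "{undefined}"] by auto
  then show ?thesis by (rule two_idx_distinct)
qed

lemma and2_as_BigAnd:
  fixes \<phi> \<psi> :: "('g,'i) fm"
  obtains I f where "and2 \<phi> \<psi> = BigAnd I f" "|I| <o k" "f ` I = {\<phi>, \<psi>}"
proof
  let ?f = "\<lambda>i. if i = fst (two_idx :: 'i \<times> 'i) then \<phi> else \<psi>"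
  show "and2 \<phi> \<psi> = BigAnd {fst two_idx, snd two_idx} ?f" by (simp add: and2_def)
  show "|{fst (two_idx :: 'i \<times> 'i), snd two_idx}| <o k" by (simp add: finite_ordLess_k)
  show "?f ` {fst two_idx, snd two_idx} = {\<phi>, \<psi>}" using two_idx_distinct_k by auto
qed

lemma or2_as_BigOr:
  fixes \<phi> \<psi> :: "('g,'i) fm"
  obtains I f where "or2 \<phi> \<psi> = BigOr I f" "|I| <o k" "f ` I = {\<phi>, \<psi>}"
proof
  let ?f = "\<lambda>i. if i = fst (two_idx :: 'i \<times> 'i) then \<phi> else \<psi>"
  show "or2 \<phi> \<psi> = BigOr {fst two_idx, snd two_idx} ?f" by (simp add: or2_def)
  show "|{fst (two_idx :: 'i \<times> 'i), snd two_idx}| <o k" by (simp add: finite_ordLess_k)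
  show "?f ` {fst two_idx, snd two_idx} = {\<phi>, \<psi>}" using two_idx_distinct_k by auto
qed

lemma Fm_and2_iff [simp]: "and2 \<phi> \<psi> \<in> Fm k G \<longleftrightarrow> \<phi> \<in> Fm k G \<and> \<psi> \<in> Fm k G"
  by (rule and2_as_BigAnd[of \<phi> \<psi>]) (simp add: Fm_BigAnd_iff)

lemma Fm_or2_iff [simp]: "or2 \<phi> \<psi> \<in> Fm k G \<longleftrightarrow> \<phi> \<in> Fm k G \<and> \<psi> \<in> Fm k G"
  by (rule or2_as_BigOr[of \<phi> \<psi>]) (simp add: Fm_BigOr_iff)

lemma Fm_fiff_iff [simp]: "fiff \<phi> \<psi> \<in> Fm k G \<longleftrightarrow> \<phi> \<in> Fm k G \<and> \<psi> \<in> Fm k G"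
  by (auto simp: fiff_def)

lemma Fm_ftop [simp]: "ftop \<in> Fm k G"
  by (simp add: ftop_def Fm_BigAnd_iff finite_ordLess_k)

lemma Fm_fbot [simp]: "fbot \<in> Fm k G"
  by (simp add: fbot_def Fm_BigOr_iff finite_ordLess_k)

lemma derives_and2L:
  assumes "and2 \<phi> \<psi> \<in> \<Gamma>" "insert \<phi> (insert \<psi> \<Gamma>) \<turnstile> \<Delta>"
  shows "\<Gamma> \<turnstile> \<Delta>"
proof (rule and2_as_BigAnd[of \<phi> \<psi>])
  fix I f assume f: "and2 \<phi> \<psi> = BigAnd I f" "f ` I = {\<phi>, \<psi>}"
  show ?thesis
  proof (rule derives_BigAndL[of I f])
    show "BigAnd I f \<in> \<Gamma>" using assms(1) f(1) by simp
    show "f ` I \<union> \<Gamma> \<turnstile> \<Delta>" using assms(2) f(2) by simp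
  qed
qed

lemma derives_or2R:
  assumes "or2 \<phi> \<psi> \<in> \<Delta>" "\<Gamma> \<turnstile> insert \<phi> (insert \<psi> \<Delta>)"
  shows "\<Gamma> \<turnstile> \<Delta>"
proof (rule or2_as_BigOr[of \<phi> \<psi>])
  fix I f assume f: "or2 \<phi> \<psi> = BigOr I f" "f ` I = {\<phi>, \<psi>}"
  show ?thesis
  proof (rule derives_BigOrR[of I f])
    show "BigOr I f \<in> \<Delta>" using assms(1) f(1) by simp
    show "\<Gamma> \<turnstile> \<Delta> \<union> f ` I" using assms(2) f(2) by (simp add: Un_commute)
  qed
qed

lemma derives_and2R:
  assumes "and2 \<phi> \<psi> \<in> \<Delta>" "\<Gamma> \<turnstile> insert \<phi> \<Delta>" "\<Gamma> \<turnstile> insert \<psi> \<Delta>"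
  shows "\<Gamma> \<turnstile> \<Delta>"
proof (rule and2_as_BigAnd[of \<phi> \<psi>])
  fix I f assume f: "and2 \<phi> \<psi> = BigAnd I f" "f ` I = {\<phi>, \<psi>}"
  show ?thesis
  proof (rule derives_BigAndR[of I f])
    fix i assume "i \<in> I"
    then have "f i = \<phi> \<or> f i = \<psi>" using f(2) by blast
    then show "\<Gamma> \<turnstile> insert (f i) \<Delta>" using assms(2,3) by blast
  qed (use assms f derives_Fm[OF assms(2)] in simp_all)
qed

lemma derives_or2L:
  assumes "or2 \<phi> \<psi> \<in> \<Gamma>" "insert \<phi> \<Gamma> \<turnstile> \<Delta>" "insert \<psi> \<Gamma> \<turnstile> \<Delta>"
  shows "\<Gamma> \<turnstile> \<Delta>"
proof (rule or2_as_BigOr[of \<phi> \<psi>])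
  fix I f assume f: "or2 \<phi> \<psi> = BigOr I f" "f ` I = {\<phi>, \<psi>}"
  show ?thesis
  proof (rule derives_BigOrL[of I f])
    fix i assume "i \<in> I"
    then have "f i = \<phi> \<or> f i = \<psi>" using f(2) by blast
    then show "insert (f i) \<Gamma> \<turnstile> \<Delta>" using assms(2,3) by blast
  qed (use assms f derives_Fm[OF assms(2)] in simp_all)
qed

lemma and2_entailsI1:
  assumes "\<phi> \<preceq> \<chi>" "\<psi> \<in> Fm k G" shows "and2 \<phi> \<psi> \<preceq> \<chi>"
  by (rule derives_and2L[of \<phi> \<psi>])
    (use assms entails_Fm[OF assms(1)] in \<open>auto intro: entails_derivesI[OF assms(1)]\<close>)

lemma and2_entailsI2:
  assumes "\<psi> \<preceq> \<chi>" "\<phi> \<in> Fm k G" shows "and2 \<phi> \<psi> \<preceq> \<chi>"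
  by (rule derives_and2L[of \<phi> \<psi>])
    (use assms entails_Fm[OF assms(1)] in \<open>auto intro: entails_derivesI[OF assms(1)]\<close>)

lemma entails_and2I:
  assumes "\<chi> \<preceq> \<phi>" "\<chi> \<preceq> \<psi>" shows "\<chi> \<preceq> and2 \<phi> \<psi>"
  by (rule derives_and2R[of \<phi> \<psi>]) (use entails_Fm[OF assms(1)] entails_Fm[OF assms(2)] in
    \<open>auto intro: entails_derivesI[OF assms(1)] entails_derivesI[OF assms(2)]\<close>)

lemma entails_or2I1:
  assumes "\<chi> \<preceq> \<phi>" "\<psi> \<in> Fm k G" shows "\<chi> \<preceq> or2 \<phi> \<psi>"
  by (rule derives_or2R[of \<phi> \<psi>])
    (use assms entails_Fm[OF assms(1)] in \<open>auto intro: entails_derivesI[OF assms(1)]\<close>)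

lemma entails_or2I2:
  assumes "\<chi> \<preceq> \<psi>" "\<phi> \<in> Fm k G" shows "\<chi> \<preceq> or2 \<phi> \<psi>"
  by (rule derives_or2R[of \<phi> \<psi>])
    (use assms entails_Fm[OF assms(1)] in \<open>auto intro: entails_derivesI[OF assms(1)]\<close>)

lemma or2_entailsI:
  assumes "\<phi> \<preceq> \<chi>" "\<psi> \<preceq> \<chi>" shows "or2 \<phi> \<psi> \<preceq> \<chi>"
  by (rule derives_or2L[of \<phi> \<psi>]) (use entails_Fm[OF assms(1)] entails_Fm[OF assms(2)] in
    \<open>auto intro: entails_derivesI[OF assms(1)] entails_derivesI[OF assms(2)]\<close>)

lemmas entails_lattice_intros =
  entails_refl and2_entailsI1 and2_entailsI2 entails_and2I entails_or2I1 entails_or2I2 or2_entailsI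

lemma and2_entails_and2: "\<phi> \<preceq> \<phi>' \<Longrightarrow> \<psi> \<preceq> \<psi>' \<Longrightarrow> and2 \<phi> \<psi> \<preceq> and2 \<phi>' \<psi>'"
  by (intro entails_and2I and2_entailsI1 and2_entailsI2) (simp_all add: entails_Fm)

lemma or2_entails_or2: "\<phi> \<preceq> \<phi>' \<Longrightarrow> \<psi> \<preceq> \<psi>' \<Longrightarrow> or2 \<phi> \<psi> \<preceq> or2 \<phi>' \<psi>'"
  by (intro or2_entailsI entails_or2I1 entails_or2I2) (simp_all add: entails_Fm)

lemma and2_or2_entails:
  assumes "\<phi> \<in> Fm k G" "\<psi> \<in> Fm k G" "\<chi> \<in> Fm k G"
  shows "and2 \<phi> (or2 \<psi> \<chi>) \<preceq> or2 (and2 \<phi> \<psi>) (and2 \<phi> \<chi>)"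
  apply (rule derives_and2L[of \<phi> "or2 \<psi> \<chi>"], simp)
  apply (rule derives_or2R[of "and2 \<phi> \<psi>" "and2 \<phi> \<chi>"], simp)
  apply (rule derives_or2L[of \<psi> \<chi>], simp)
   apply (rule derives_and2R[of \<phi> \<psi>], simp)
    apply (rule derives_axiom[of \<phi>]; simp add: assms)
   apply (rule derives_axiom[of \<psi>]; simp add: assms)
  apply (rule derives_and2R[of \<phi> \<chi>], simp)
   apply (rule derives_axiom[of \<phi>]; simp add: assms)
  apply (rule derives_axiom[of \<chi>]; simp add: assms)
  done

lemma and2_or2_entails_or2_and2:
  assumes "\<phi> \<in> Fm k G" "\<psi> \<in> Fm k G" "\<chi> \<in> Fm k G"
  shows "and2 (or2 \<phi> \<psi>) (or2 \<phi> \<chi>) \<preceq> or2 \<phi> (and2 \<psi> \<chi>)"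
  apply (rule derives_and2L[of "or2 \<phi> \<psi>" "or2 \<phi> \<chi>"], simp)
  apply (rule derives_or2R[of \<phi> "and2 \<psi> \<chi>"], simp)
  apply (rule derives_or2L[of \<phi> \<psi>], simp)
   apply (rule derives_axiom[of \<phi>]; simp add: assms)
  apply (rule derives_or2L[of \<phi> \<chi>], simp)
   apply (rule derives_axiom[of \<phi>]; simp add: assms)
  apply (rule derives_and2R[of \<psi> \<chi>], simp)
   apply (rule derives_axiom[of \<psi>]; simp add: assms)
  apply (rule derives_axiom[of \<chi>]; simp add: assms)
  done

lemma ftop_entails_or2_Neg: "\<phi> \<in> Fm k G \<Longrightarrow> ftop \<preceq> or2 \<phi> (Neg \<phi>)"
  apply (rule derives_or2R[of \<phi> "Neg \<phi>"], simp)
  apply (rule derives_NegR[of \<phi>], simp)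
  apply (rule derives_axiom[of \<phi>]; simp)
  done

lemma and2_Neg_entails_fbot: "\<phi> \<in> Fm k G \<Longrightarrow> and2 \<phi> (Neg \<phi>) \<preceq> fbot"
  apply (rule derives_and2L[of \<phi> "Neg \<phi>"], simp)
  apply (rule derives_NegL[of \<phi>], simp)
  apply (rule derives_axiom[of \<phi>]; simp)
  done

lemma entails_ftop: "\<phi> \<in> Fm k G \<Longrightarrow> \<phi> \<preceq> ftop"
  by (rule derives_ftop) simp_all

lemma fbot_entails: "\<phi> \<in> Fm k G \<Longrightarrow> fbot \<preceq> \<phi>"
  by (rule derives_fbot) simp_all

lemma ftop_entails_Box_ftop: "ftop \<preceq> Box ftop"
proof -
  have "{} \<turnstile> {ftop}" by (rule derives_ftop) simp_all
  then have "Box ` {} \<turnstile> {Box ftop}" by (rule Nec)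
  then show ?thesis by (rule derives_mono) simp_all
qed

lemma and2_Box_entails_Box_and2:
  assumes "\<phi> \<in> Fm k G" "\<psi> \<in> Fm k G"
  shows "and2 (Box \<phi>) (Box \<psi>) \<preceq> Box (and2 \<phi> \<psi>)"
proof -
  have "{\<phi>, \<psi>} \<turnstile> {and2 \<phi> \<psi>}"
    apply (rule derives_and2R[of \<phi> \<psi>], simp)
     apply (rule derives_axiom[of \<phi>]; simp add: assms)
    apply (rule derives_axiom[of \<psi>]; simp add: assms)
    done
  then have "{Box \<phi>, Box \<psi>} \<turnstile> {Box (and2 \<phi> \<psi>)}"
    using Nec[where S = "{\<phi>, \<psi>}"] by simp
  then show ?thesis
    by - (rule derives_and2L[of "Box \<phi>" "Box \<psi>"], simp, erule derives_mono; simp add: assms)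
qed

lemma inst_in_Fm: "(\<And>n. s n \<in> Fm k G) \<Longrightarrow> inst s \<phi> \<in> Fm k G"
  by (induction \<phi>) simp_all

lemma ftop_entails_Linst: "\<phi> \<in> Linst k G L \<Longrightarrow> ftop \<preceq> \<phi>"
  by (rule derives_Linst) (auto simp: Linst_def inst_in_Fm)

lemma derives_fiff_iff:
  assumes "\<phi> \<in> Fm k G" "\<psi> \<in> Fm k G"
  shows "{} \<turnstile> {fiff \<phi> \<psi>} \<longleftrightarrow> \<phi> \<preceq> \<psi> \<and> \<psi> \<preceq> \<phi>"
proof
  assume fiff: "{} \<turnstile> {fiff \<phi> \<psi>}"
  have mp1: "insert (fiff \<phi> \<psi>) {\<phi>} \<turnstile> {\<psi>}"
    unfolding fiff_def
    apply (rule derives_and2L[of "or2 (Neg \<phi>) \<psi>" "or2 (Neg \<psi>) \<phi>"], simp)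
    apply (rule derives_or2L[of "Neg \<phi>" \<psi>], simp)
     apply (rule derives_NegL[of \<phi>], simp)
     apply (rule derives_axiom[of \<phi>]; simp add: assms)
    apply (rule derives_axiom[of \<psi>]; simp add: assms)
    done
  have mp2: "insert (fiff \<phi> \<psi>) {\<psi>} \<turnstile> {\<phi>}"
    unfolding fiff_def
    apply (rule derives_and2L[of "or2 (Neg \<phi>) \<psi>" "or2 (Neg \<psi>) \<phi>"], simp)
    apply (rule derives_or2L[of "Neg \<psi>" \<phi>], simp)
     apply (rule derives_NegL[of \<psi>], simp)
     apply (rule derives_axiom[of \<psi>]; simp add: assms)
    apply (rule derives_axiom[of \<phi>]; simp add: assms)
    done
  have "{\<chi>} \<turnstile> insert (fiff \<phi> \<psi>) {\<chi>'}" if "\<chi> \<in> Fm k G" "\<chi>' \<in> Fm k G" for \<chi> \<chi>'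
    using fiff by (rule derives_mono) (simp_all add: assms that)
  then show "\<phi> \<preceq> \<psi> \<and> \<psi> \<preceq> \<phi>"
    using derives_cut[OF _ mp1] derives_cut[OF _ mp2] assms by simp
next
  assume "\<phi> \<preceq> \<psi> \<and> \<psi> \<preceq> \<phi>"
  then have le: "\<phi> \<preceq> \<psi>" "\<psi> \<preceq> \<phi>" by simp_all
  show "{} \<turnstile> {fiff \<phi> \<psi>}"
    unfolding fiff_def
    apply (rule derives_and2R[of "or2 (Neg \<phi>) \<psi>" "or2 (Neg \<psi>) \<phi>"], simp)
     apply (rule derives_or2R[of "Neg \<phi>" \<psi>], simp)
     apply (rule derives_NegR[of \<phi>], simp)
     apply (rule derives_mono[OF le(1)]; simp add: assms)
    apply (rule derives_or2R[of "Neg \<psi>" \<phi>], simp)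
    apply (rule derives_NegR[of \<psi>], simp)
    apply (rule derives_mono[OF le(2)]; simp add: assms)
    done
qed

section \<open>The Lindenbaum-Tarski algebra\<close>

abbreviation cls :: "('g,'i) fm \<Rightarrow> ('g,'i) fm set" where
  "cls \<equiv> lt_cls k G L T"

lemma lt_rel_iff: "(\<phi>, \<psi>) \<in> lt_rel k G L T \<longleftrightarrow> \<phi> \<preceq> \<psi> \<and> \<psi> \<preceq> \<phi>"
  unfolding lt_rel_def using derives_fiff_iff entails_Fm by blast

lemma equiv_lt_rel: "equiv (Fm k G) (lt_rel k G L T)"
proof (rule equivI)
  show "lt_rel k G L T \<subseteq> Fm k G \<times> Fm k G" by (auto simp: lt_rel_def)
  show "refl_on (Fm k G) (lt_rel k G L T)"
    unfolding refl_on_def lt_rel_def by (auto simp: derives_fiff_iff entails_refl)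
  show "sym (lt_rel k G L T)" by (rule symI) (simp add: lt_rel_iff)
  show "trans (lt_rel k G L T)" by (rule transI) (auto simp: lt_rel_iff intro: entails_trans)
qed

lemma lt_cls_eq_iff: "\<phi> \<in> Fm k G \<Longrightarrow> \<psi> \<in> Fm k G \<Longrightarrow> cls \<phi> = cls \<psi> \<longleftrightarrow> \<phi> \<preceq> \<psi> \<and> \<psi> \<preceq> \<phi>"
  unfolding lt_cls_def by (simp add: eq_equiv_class_iff[OF equiv_lt_rel] lt_rel_iff)

lemma lt_cls_eqI: "\<phi> \<preceq> \<psi> \<Longrightarrow> \<psi> \<preceq> \<phi> \<Longrightarrow> cls \<phi> = cls \<psi>"
  using lt_cls_eq_iff entails_Fm by blast

lemma rep_lt_cls:
  assumes "\<phi> \<in> Fm k G" shows "rep (cls \<phi>) \<preceq> \<phi>" "\<phi> \<preceq> rep (cls \<phi>)"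
proof -
  have "\<phi> \<in> cls \<phi>" unfolding lt_cls_def by (rule equiv_class_self[OF equiv_lt_rel assms])
  then have "rep (cls \<phi>) \<in> cls \<phi>" unfolding rep_def by (rule someI)
  then show "rep (cls \<phi>) \<preceq> \<phi>" "\<phi> \<preceq> rep (cls \<phi>)" by (simp_all add: lt_cls_def lt_rel_iff)
qed

lemma LT_carrier: "mcar (LT k G L T) = cls ` Fm k G"
  by (auto simp: LT_def quotient_def lt_cls_def)

lemma lt_cls_in_carrier [simp]: "\<phi> \<in> Fm k G \<Longrightarrow> cls \<phi> \<in> mcar (LT k G L T)"
  by (simp add: LT_carrier)

lemma ball_LT_carrier: "(\<forall>X \<in> mcar (LT k G L T). P X) \<longleftrightarrow> (\<forall>\<phi> \<in> Fm k G. P (cls \<phi>))"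
  by (simp add: LT_carrier)

lemma lt_cls_rep:
  assumes "X \<in> mcar (LT k G L T)" shows "rep X \<in> Fm k G" "cls (rep X) = X"
proof -
  obtain \<phi> where "\<phi> \<in> Fm k G" "X = cls \<phi>" using assms by (auto simp: LT_carrier)
  then show "rep X \<in> Fm k G" "cls (rep X) = X"
    using rep_lt_cls entails_Fm lt_cls_eqI by blast+
qed

lemma LT_meet_join:
  assumes "\<phi> \<in> Fm k G" "\<psi> \<in> Fm k G"
  shows "mmeet (LT k G L T) (cls \<phi>) (cls \<psi>) = cls (and2 \<phi> \<psi>)"
    and "mjoin (LT k G L T) (cls \<phi>) (cls \<psi>) = cls (or2 \<phi> \<psi>)"
  using rep_lt_cls[OF assms(1)] rep_lt_cls[OF assms(2)] unfolding LT_def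
  by (auto intro!: lt_cls_eqI and2_entails_and2 or2_entails_or2)

lemma LT_neg_box:
  assumes "\<phi> \<in> Fm k G"
  shows "mneg (LT k G L T) (cls \<phi>) = cls (Neg \<phi>)"
    and "mbox (LT k G L T) (cls \<phi>) = cls (Box \<phi>)"
  using rep_lt_cls[OF assms] unfolding LT_def
  by (auto intro!: lt_cls_eqI Neg_entails_Neg Box_entails_Box)

lemma LT_top_bot: "mtop (LT k G L T) = cls ftop" "mbot (LT k G L T) = cls fbot"
  by (simp_all add: LT_def)

lemma LT_le_iff:
  assumes "\<phi> \<in> Fm k G" "\<psi> \<in> Fm k G"
  shows "mle (LT k G L T) (cls \<phi>) (cls \<psi>) \<longleftrightarrow> \<phi> \<preceq> \<psi>"
proof -
  have "mle (LT k G L T) (cls \<phi>) (cls \<psi>) \<longleftrightarrow> and2 \<phi> \<psi> \<preceq> \<phi> \<and> \<phi> \<preceq> and2 \<phi> \<psi>"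
    using assms by (simp add: mle_def LT_meet_join LT_neg_box lt_cls_eq_iff)
  also have "\<dots> \<longleftrightarrow> \<phi> \<preceq> \<psi>"
  proof
    assume "and2 \<phi> \<psi> \<preceq> \<phi> \<and> \<phi> \<preceq> and2 \<phi> \<psi>"
    then show "\<phi> \<preceq> \<psi>" using assms by (blast intro: entails_trans and2_entailsI2 entails_refl)
  qed (use assms in \<open>simp add: and2_entailsI1 entails_and2I entails_refl\<close>)
  finally show ?thesis .
qed

lemma modal_algebra_LT: "modal_algebra (LT k G L T)"
  unfolding modal_algebra_def ball_LT_carrier
  apply (intro conjI ballI)
  apply (simp_all add: LT_meet_join LT_neg_box LT_top_bot)
  apply (rule lt_cls_eqI;
      fastforce intro: entails_lattice_intros entails_ftop fbot_entails Box_entails_Box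
        and2_or2_entails and2_or2_entails_or2_and2 ftop_entails_or2_Neg and2_Neg_entails_fbot
        ftop_entails_Box_ftop and2_Box_entails_Box_and2)+
  done

lemma meval_LT:
  assumes "\<And>n. v n \<in> mcar (LT k G L T)"
  shows "meval (LT k G L T) v \<phi> = cls (inst (\<lambda>n. rep (v n)) \<phi>)"
proof (induction \<phi>)
  case (MVar n)
  show ?case using lt_cls_rep[OF assms] by simp
qed (simp_all add: LT_meet_join LT_neg_box inst_in_Fm lt_cls_rep[OF assms])

lemma L_algebra_LT: "L_algebra L (LT k G L T)"
  unfolding L_algebra_def
proof (intro conjI ballI allI impI)
  fix \<phi> and v :: "nat \<Rightarrow> ('g,'i) fm set"
  assume "\<phi> \<in> L" "\<forall>n. v n \<in> mcar (LT k G L T)"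
  then have "inst (\<lambda>n. rep (v n)) \<phi> \<in> Linst k G L"
    using lt_cls_rep unfolding Linst_def by blast
  then show "meval (LT k G L T) v \<phi> = mtop (LT k G L T)"
    using \<open>\<forall>n. v n \<in> mcar (LT k G L T)\<close>
    by (auto simp: meval_LT LT_top_bot intro!: lt_cls_eqI ftop_entails_Linst entails_ftop
        inst_in_Fm lt_cls_rep)
qed (rule modal_algebra_LT)

lemma is_glb_LT_BigAnd:
  assumes "|I| <o k" "f ` I \<subseteq> Fm k G"
  shows "is_glb (LT k G L T) (cls ` f ` I) (cls (BigAnd I f))"
  using assms unfolding is_glb_def ball_LT_carrier
  by (auto simp: LT_le_iff Fm_BigAnd_iff image_subset_iff intro: BigAnd_entails entails_BigAndI)

lemma is_lub_LT_BigOr: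
  assumes "|I| <o k" "f ` I \<subseteq> Fm k G"
  shows "is_lub (LT k G L T) (cls ` f ` I) (cls (BigOr I f))"
  using assms unfolding is_lub_def ball_LT_carrier
  by (auto simp: LT_le_iff Fm_BigOr_iff image_subset_iff intro: entails_BigOr BigOr_entailsI)

lemma small_subset_LT_as_family:
  assumes "X \<subseteq> mcar (LT k G L T)" "|X| <o k"
  obtains I :: "'i set" and f where "|I| <o k" "f ` I \<subseteq> Fm k G" "cls ` f ` I = X"
proof -
  have "|X| \<le>o |Field k|"
    using assms(2) card_of_Field_ordIso card_order_on_Card_order[OF card_order_k]
    by (meson ordIso_symmetric ordLess_imp_ordLeq ordLess_ordIso_trans)
  then obtain g where g: "inj_on g X" "g ` X \<subseteq> Field k"
    by (auto simp: card_of_ordLeq[symmetric])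
  let ?f = "\<lambda>i. rep (inv_into X g i)"
  show ?thesis
  proof (rule that[of "g ` X" ?f])
    show "|g ` X| <o k" using card_of_image assms(2) by (rule ordLeq_ordLess_trans)
    have "?f ` g ` X = rep ` X" using g(1) by (auto simp: image_image)
    moreover have "rep ` X \<subseteq> Fm k G" using assms(1) lt_cls_rep(1) by blast
    moreover have "cls ` rep ` X = X"
      using assms(1) lt_cls_rep(2) by (simp add: image_image subset_eq)
    ultimately show "?f ` g ` X \<subseteq> Fm k G" "cls ` ?f ` g ` X = X" by simp_all
  qed
qed

lemma kappa_complete_LT: "kappa_complete k (LT k G L T)"
  unfolding kappa_complete_def
proof (intro allI impI)
  fix X assume "X \<subseteq> mcar (LT k G L T) \<and> |X| <o k"
  then obtain I :: "'i set" and f where "|I| <o k" "f ` I \<subseteq> Fm k G" "cls ` f ` I = X"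
    by (auto elim: small_subset_LT_as_family)
  then show "(\<exists>m. is_glb (LT k G L T) X m) \<and> (\<exists>j. is_lub (LT k G L T) X j)"
    using is_glb_LT_BigAnd is_lub_LT_BigOr by blast
qed

lemma LT_well_defined: "LT_well_defined k G L T"
  unfolding LT_well_defined_def lt_rel_iff
  by (simp add: equiv_lt_rel and2_entails_and2 or2_entails_or2 Neg_entails_Neg Box_entails_Box)

end

theorem proposition4p3:
  fixes k :: "'i rel" and G :: "'g set" and L :: "mfm set" and T :: "('g,'i) fm set"
  assumes "card_order k" and "cinfinite k" and "regularCard k"
    and "normal_logic L" and "has_fmp L"
    and "T \<subseteq> Fm k G"
  shows "LT_well_defined k G L T
    \<and> L_algebra L (LT k G L T)
    \<and> kappa_complete k (LT k G L T)
    \<and> (\<forall>I f. |I| <o k \<and> f ` I \<subseteq> Fm k G \<longrightarrow>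
          is_glb (LT k G L T) (lt_cls k G L T ` f ` I) (lt_cls k G L T (BigAnd I f))
        \<and> is_lub (LT k G L T) (lt_cls k G L T ` f ` I) (lt_cls k G L T (BigOr I f)))"
proof -
  interpret lindenbaum_tarski k G L T
    using assms(1,2) by unfold_locales
  show ?thesis
    using LT_well_defined L_algebra_LT kappa_complete_LT is_glb_LT_BigAnd is_lub_LT_BigOr
    by blast
qed

end
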